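(* The sequent $\cdot;\cdot\Rightarrow\bot$ (empty context, no hypotheses, conclusion $\bot$) is not derivable in the sequent calculus $NL^{\Rightarrow}$.
   Context: Types are $\tau ::= \delta \mid \nu \mid \langle\nu\rangle\tau$, with $\delta$ ranging over data types and $\nu$ over name types. Terms are $t ::= x \mid \mathsf{a} \mid c \mid f(t_1,\dots,t_n)$, where $x$ ranges over a countably infinite set of variables and $\mathsf a,\mathsf b,\dots$ over a disjoint countably infinite set of name-symbols. The signature assigns $c:\delta$, $f:\tau_1,\dots,\tau_n\to\delta$, $p:\tau_1,\dots,\tau_n\to o$, and contains for all name types $\nu$ and types $\tau$ the symbols $swap:\nu,\nu,\tau\to\tau$, $abs:\nu,\tau\to\langle\nu\rangle\tau$, $eq:\tau,\tau\to o$, $fresh:\nu,\tau\to o$, written $(a\;b)\cdot t$, $\langle a\rangle t$, $t\approx u$, $a\# t$. Formulas: $\top,\bot,p(\vec t),\phi\wedge\psi,\phi\vee\psi,\phi\supset\psi,\forall x{:}\tau.\phi,\exists x{:}\tau.\phi$, and $\mathsf{N}\mathsf a{:}\nu.\phi$ (the fresh-name quantifier, binding the name-symbol $\mathsf a$). Contexts are $\Sigma::=\cdot\mid\Sigma,x{:}\tau\mid\Sigma\#\mathsf a{:}\nu$ (no symbol twice); $\Sigma\#\mathsf a{:}\nu$ records that $\mathsf a$ has type $\nu$ and is fresh for everything in $\Sigma$. Typing is the standard many-sorted one ($\Sigma\vdash\mathsf N\mathsf a{:}\nu.\phi:o$ iff $\Sigma\#\mathsf a{:}\nu\vdash\phi:o$).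 $Tm_\Sigma$ is the set of terms well-typed in $\Sigma$; $|\cdot|=\emptyset$, $|\Sigma,x{:}\tau|=|\Sigma|$, $|\Sigma\#\mathsf a{:}\nu|=|\Sigma|\cup\{\mathsf a\#t\mid t\in Tm_\Sigma\}$. $NL^{\Rightarrow}$ derives sequents $\Sigma;\Gamma\Rightarrow\Delta$ ($\Gamma,\Delta$ finite multisets of formulas well-formed in $\Sigma$) by: (i) the classical G3c rules: initial sequents $\Sigma;\Gamma,P\Rightarrow P,\Delta$ for atomic $P$, $\Sigma;\Gamma\Rightarrow\top,\Delta$, $\Sigma;\Gamma,\bot\Rightarrow\Delta$, and the standard context-sharing left/right rules for $\wedge,\vee,\supset,\forall,\exists$ ($\forall R$, $\exists L$ add a fresh eigenvariable $x{:}\sigma$ to $\Sigma$; $\forall L$ from $\Sigma;\Gamma,\forall x{:}\sigma.\phi,\phi[t/x]\Rightarrow\Delta$ and $\exists R$ from $\Sigma;\Gamma\Rightarrow\exists x{:}\sigma.\phi,\phi[t/x],\Delta$ with $\Sigma\vdash t:\sigma$); (ii) $\mathsf N R$: from $\Sigma\#\mathsf a{:}\nu;\Gamma\Rightarrow\phi,\Delta$ infer $\Sigma;\Gamma\Rightarrow\mathsf N\mathsf a{:}\nu.\phi,\Delta$, and $\mathsf N L$: from $\Sigma\#\mathsf a{:}\nu;\Gamma,\phi\Rightarrow\Delta$ infer $\Sigma;\Gamma,\mathsf N\mathsf a{:}\nu.\phi\Rightarrow\Delta$ (both with $\mathsf a\notin\Sigma$); (iii) nonlogical rules: $\approx R$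 (from $\Sigma;\Gamma,t\approx t\Rightarrow\Delta$ infer $\Sigma;\Gamma\Rightarrow\Delta$); $\approx S$ (from $\Sigma;\Gamma,t\approx u,P(t),P(u)\Rightarrow\Delta$ infer $\Sigma;\Gamma,t\approx u,P(t)\Rightarrow\Delta$, $P$ atomic); for each instance $P_1\wedge\dots\wedge P_n\supset Q_1\vee\dots\vee Q_m$ ($m\ge 0$) of the schemes (S1) $(a\;a)\cdot x\approx x$, (S2) $(a\;b)\cdot(a\;b)\cdot x\approx x$, (S3) $(a\;b)\cdot a\approx b$, (E1) $(a\;b)\cdot c\approx c$, (E2) $(a\;b)\cdot f(\vec t)\approx f((a\;b)\cdot\vec t)$, (E3) $p(\vec t)\supset p((a\;b)\cdot\vec t)$, (F1) $a\#x\wedge b\#x\supset(a\;b)\cdot x\approx x$, (F2) $a\#b$ for $a,b$ of distinct name types, (F3) $a\#a\supset\bot$ ($m=0$), (F4) $a\#b\vee a\approx b$, (A1) $a\#y\wedge x\approx(a\;b)\cdot y\supset\langle a\rangle x\approx\langle b\rangle y$ (with $a,b$ arbitrary well-typed terms of name type, $x,y,\vec t$ arbitrary well-typed terms), the rule: from $\Sigma;\Gamma,\vec P,Q_i\Rightarrow\Delta$ for all $i\le m$ infer $\Sigma;\Gamma,\vec P\Rightarrow\Delta$; (A2) from $\Sigma;\Gamma,E,a\approx b,t\approx u\Rightarrow\Delta$ and $\Sigma;\Gamma,E,a\#u,t\approx(a\;b)\cdot u\Rightarrow\Delta$ infer $\Sigma;\Gamma,E\Rightarrow\Delta$, where $E$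 is $\langle a\rangle t\approx\langle b\rangle u$; (A3) from $\Sigma\vdash t:\langle\nu\rangle\sigma$ and $\Sigma,a{:}\nu,x{:}\sigma;\Gamma,t\approx\langle a\rangle x\Rightarrow\Delta$ ($a,x\notin\Sigma$) infer $\Sigma;\Gamma\Rightarrow\Delta$; (F) from $\Sigma\#\mathsf a{:}\nu;\Gamma\Rightarrow\Delta$ ($\mathsf a\notin\Sigma$) infer $\Sigma;\Gamma\Rightarrow\Delta$; ($\Sigma\#$) from $\Sigma;\Gamma,\mathsf a\#t\Rightarrow\Delta$ with $\mathsf a\#t\in|\Sigma|$ infer $\Sigma;\Gamma\Rightarrow\Delta$. *)

theory Defs
  imports Main "HOL-Library.Multiset"
begin

section \<open>Syntax of nominal logic (locally nameless representation)\<close>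

text \<open>Types: tau ::= delta | nu | <nu>tau.  Data types range over 'd, name types over 'n.\<close>
datatype ('d, 'n) ty = TData 'd | TName 'n | TAbs 'n "('d, 'n) ty"

text \<open>Free variables x are natural numbers (countably infinite), free
  name-symbols are natural numbers (a disjoint countably infinite set, via the
  constructor Nm).  BVar i / BNm i are de Bruijn indices for variables bound by
  a quantifier (All/Ex) resp. name-symbols bound by the fresh-name quantifier
  (New); they never occur in the formulas of a sequent except under binders.
  Swap a b t is (a b).t, Abst a t is <a>t.\<close>
datatype ('c, 'f) tm =
    Var nat | BVar nat | Nm nat | BNm nat
  | Const 'c | Fn 'f "('c, 'f) tm list"
  | Swap "('c, 'f) tm" "('c, 'f) tm" "('c, 'f) tm"
  | Abst "('c, 'f) tm" "('c, 'f) tm"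

text \<open>Formulas.  Eq t u is t \<approx> u, Fresh a t is a # t;  All/Ex bind a variable
  (index space of BVar), New binds a name-symbol (index space of BNm).\<close>
datatype ('d, 'n, 'c, 'f, 'p) fm =
    Top | Bot
  | Pred 'p "('c, 'f) tm list"
  | Eq "('c, 'f) tm" "('c, 'f) tm"
  | Fresh "('c, 'f) tm" "('c, 'f) tm"
  | Conj "('d, 'n, 'c, 'f, 'p) fm" "('d, 'n, 'c, 'f, 'p) fm"
  | Disj "('d, 'n, 'c, 'f, 'p) fm" "('d, 'n, 'c, 'f, 'p) fm"
  | Imp "('d, 'n, 'c, 'f, 'p) fm" "('d, 'n, 'c, 'f, 'p) fm"
  | All "('d, 'n) ty" "('d, 'n, 'c, 'f, 'p) fm"
  | Ex "('d, 'n) ty" "('d, 'n, 'c, 'f, 'p) fm"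
  | New 'n "('d, 'n, 'c, 'f, 'p) fm"

text \<open>The (user part of the) signature: c : delta, f : tau_1..tau_n -> delta,
  p : tau_1..tau_n -> o.  swap, abs, eq, fresh are built in.\<close>
record ('c, 'f, 'p, 'd, 'n) signature =
  sig_c :: "'c \<Rightarrow> 'd"
  sig_f :: "'f \<Rightarrow> ('d, 'n) ty list \<times> 'd"
  sig_p :: "'p \<Rightarrow> ('d, 'n) ty list"

text \<open>Context entries: x:tau  and  #a:nu.  A context is a list, read left to right.\<close>
datatype ('d, 'n) centry = CVar nat "('d, 'n) ty" | CNm nat 'n

type_synonym ('d, 'n) ctx = "('d, 'n) centry list"

fun entry_sym :: "('d, 'n) centry \<Rightarrow> nat + nat" where
  "entry_sym (CVar x _) = Inl x"
| "entry_sym (CNm a _) = Inr a"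

definition ctx_ok :: "('d, 'n) ctx \<Rightarrow> bool" where
  "ctx_ok \<Sigma> \<longleftrightarrow> distinct (map entry_sym \<Sigma>)"

definition var_in :: "nat \<Rightarrow> ('d, 'n) ctx \<Rightarrow> bool" where
  "var_in x \<Sigma> \<longleftrightarrow> Inl x \<in> set (map entry_sym \<Sigma>)"

definition nm_in :: "nat \<Rightarrow> ('d, 'n) ctx \<Rightarrow> bool" where
  "nm_in a \<Sigma> \<longleftrightarrow> Inr a \<in> set (map entry_sym \<Sigma>)"

section \<open>Typing\<close>

text \<open>has_ty S \<Sigma> Bv Bn t tau: t has type tau in context \<Sigma>, where Bv (resp. Bn)
  lists the types of the enclosing bound variables (resp. bound name-symbols).\<close>
inductive has_ty :: "('c, 'f, 'p, 'd, 'n) signature \<Rightarrow> ('d, 'n) ctx \<Rightarrow> ('d, 'n) ty list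
    \<Rightarrow> 'n list \<Rightarrow> ('c, 'f) tm \<Rightarrow> ('d, 'n) ty \<Rightarrow> bool"
  for S :: "('c, 'f, 'p, 'd, 'n) signature" where
  T_Var: "CVar x \<tau> \<in> set \<Sigma> \<Longrightarrow> has_ty S \<Sigma> Bv Bn (Var x) \<tau>"
| T_BVar: "i < length Bv \<Longrightarrow> has_ty S \<Sigma> Bv Bn (BVar i) (Bv ! i)"
| T_Nm: "CNm a \<nu> \<in> set \<Sigma> \<Longrightarrow> has_ty S \<Sigma> Bv Bn (Nm a) (TName \<nu>)"
| T_BNm: "i < length Bn \<Longrightarrow> has_ty S \<Sigma> Bv Bn (BNm i) (TName (Bn ! i))"
| T_Const: "has_ty S \<Sigma> Bv Bn (Const c) (TData (sig_c S c))"
| T_Fn: "sig_f S f = (\<tau>s, \<delta>) \<Longrightarrow> list_all2 (has_ty S \<Sigma> Bv Bn) ts \<tau>s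
         \<Longrightarrow> has_ty S \<Sigma> Bv Bn (Fn f ts) (TData \<delta>)"
| T_Swap: "has_ty S \<Sigma> Bv Bn a (TName \<nu>) \<Longrightarrow> has_ty S \<Sigma> Bv Bn b (TName \<nu>) \<Longrightarrow> has_ty S \<Sigma> Bv Bn t \<tau>
         \<Longrightarrow> has_ty S \<Sigma> Bv Bn (Swap a b t) \<tau>"
| T_Abst: "has_ty S \<Sigma> Bv Bn a (TName \<nu>) \<Longrightarrow> has_ty S \<Sigma> Bv Bn t \<tau>
         \<Longrightarrow> has_ty S \<Sigma> Bv Bn (Abst a t) (TAbs \<nu> \<tau>)"

text \<open>Sigma |- t : tau  (t in Tm_Sigma, no dangling bound indices).\<close>
abbreviation tmty :: "('c, 'f, 'p, 'd, 'n) signature \<Rightarrow> ('d, 'n) ctx \<Rightarrow> ('c, 'f) tm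
    \<Rightarrow> ('d, 'n) ty \<Rightarrow> bool" where
  "tmty S \<Sigma> t \<tau> \<equiv> has_ty S \<Sigma> [] [] t \<tau>"

inductive wff :: "('c, 'f, 'p, 'd, 'n) signature \<Rightarrow> ('d, 'n) ctx \<Rightarrow> ('d, 'n) ty list
    \<Rightarrow> 'n list \<Rightarrow> ('d, 'n, 'c, 'f, 'p) fm \<Rightarrow> bool"
  for S :: "('c, 'f, 'p, 'd, 'n) signature" where
  W_Top: "wff S \<Sigma> Bv Bn Top"
| W_Bot: "wff S \<Sigma> Bv Bn Bot"
| W_Pred: "list_all2 (has_ty S \<Sigma> Bv Bn) ts (sig_p S p) \<Longrightarrow> wff S \<Sigma> Bv Bn (Pred p ts)"
| W_Eq: "has_ty S \<Sigma> Bv Bn t \<tau> \<Longrightarrow> has_ty S \<Sigma> Bv Bn u \<tau> \<Longrightarrow> wff S \<Sigma> Bv Bn (Eq t u)"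
| W_Fresh: "has_ty S \<Sigma> Bv Bn a (TName \<nu>) \<Longrightarrow> has_ty S \<Sigma> Bv Bn t \<tau> \<Longrightarrow> wff S \<Sigma> Bv Bn (Fresh a t)"
| W_Conj: "wff S \<Sigma> Bv Bn \<phi> \<Longrightarrow> wff S \<Sigma> Bv Bn \<psi> \<Longrightarrow> wff S \<Sigma> Bv Bn (Conj \<phi> \<psi>)"
| W_Disj: "wff S \<Sigma> Bv Bn \<phi> \<Longrightarrow> wff S \<Sigma> Bv Bn \<psi> \<Longrightarrow> wff S \<Sigma> Bv Bn (Disj \<phi> \<psi>)"
| W_Imp: "wff S \<Sigma> Bv Bn \<phi> \<Longrightarrow> wff S \<Sigma> Bv Bn \<psi> \<Longrightarrow> wff S \<Sigma> Bv Bn (Imp \<phi> \<psi>)"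
| W_All: "wff S \<Sigma> (\<tau> # Bv) Bn \<phi> \<Longrightarrow> wff S \<Sigma> Bv Bn (All \<tau> \<phi>)"
| W_Ex: "wff S \<Sigma> (\<tau> # Bv) Bn \<phi> \<Longrightarrow> wff S \<Sigma> Bv Bn (Ex \<tau> \<phi>)"
| W_New: "wff S \<Sigma> Bv (\<nu> # Bn) \<phi> \<Longrightarrow> wff S \<Sigma> Bv Bn (New \<nu> \<phi>)"

definition wf_seq :: "('c, 'f, 'p, 'd, 'n) signature \<Rightarrow> ('d, 'n) ctx
    \<Rightarrow> ('d, 'n, 'c, 'f, 'p) fm multiset \<Rightarrow> ('d, 'n, 'c, 'f, 'p) fm multiset \<Rightarrow> bool" where
  "wf_seq S \<Sigma> \<Gamma> \<Delta> \<longleftrightarrow> ctx_ok \<Sigma> \<and> (\<forall>\<phi> \<in># \<Gamma> + \<Delta>. wff S \<Sigma> [] [] \<phi>)"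

section \<open>Substitution (opening of binders)\<close>

fun open_tv :: "nat \<Rightarrow> ('c, 'f) tm \<Rightarrow> ('c, 'f) tm \<Rightarrow> ('c, 'f) tm" where
  "open_tv k s (Var x) = Var x"
| "open_tv k s (BVar i) = (if i = k then s else BVar i)"
| "open_tv k s (Nm a) = Nm a"
| "open_tv k s (BNm i) = BNm i"
| "open_tv k s (Const c) = Const c"
| "open_tv k s (Fn f ts) = Fn f (map (open_tv k s) ts)"
| "open_tv k s (Swap a b t) = Swap (open_tv k s a) (open_tv k s b) (open_tv k s t)"
| "open_tv k s (Abst a t) = Abst (open_tv k s a) (open_tv k s t)"

fun open_tn :: "nat \<Rightarrow> ('c, 'f) tm \<Rightarrow> ('c, 'f) tm \<Rightarrow> ('c, 'f) tm" where
  "open_tn k s (Var x) = Var x"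
| "open_tn k s (BVar i) = BVar i"
| "open_tn k s (Nm a) = Nm a"
| "open_tn k s (BNm i) = (if i = k then s else BNm i)"
| "open_tn k s (Const c) = Const c"
| "open_tn k s (Fn f ts) = Fn f (map (open_tn k s) ts)"
| "open_tn k s (Swap a b t) = Swap (open_tn k s a) (open_tn k s b) (open_tn k s t)"
| "open_tn k s (Abst a t) = Abst (open_tn k s a) (open_tn k s t)"

fun open_fv :: "nat \<Rightarrow> ('c, 'f) tm \<Rightarrow> ('d, 'n, 'c, 'f, 'p) fm \<Rightarrow> ('d, 'n, 'c, 'f, 'p) fm" where
  "open_fv k s Top = Top"
| "open_fv k s Bot = Bot"
| "open_fv k s (Pred p ts) = Pred p (map (open_tv k s) ts)"
| "open_fv k s (Eq t u) = Eq (open_tv k s t) (open_tv k s u)"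
| "open_fv k s (Fresh a t) = Fresh (open_tv k s a) (open_tv k s t)"
| "open_fv k s (Conj \<phi> \<psi>) = Conj (open_fv k s \<phi>) (open_fv k s \<psi>)"
| "open_fv k s (Disj \<phi> \<psi>) = Disj (open_fv k s \<phi>) (open_fv k s \<psi>)"
| "open_fv k s (Imp \<phi> \<psi>) = Imp (open_fv k s \<phi>) (open_fv k s \<psi>)"
| "open_fv k s (All \<tau> \<phi>) = All \<tau> (open_fv (Suc k) s \<phi>)"
| "open_fv k s (Ex \<tau> \<phi>) = Ex \<tau> (open_fv (Suc k) s \<phi>)"
| "open_fv k s (New \<nu> \<phi>) = New \<nu> (open_fv k s \<phi>)"

fun open_fn :: "nat \<Rightarrow> ('c, 'f) tm \<Rightarrow> ('d, 'n, 'c, 'f, 'p) fm \<Rightarrow> ('d, 'n, 'c, 'f, 'p) fm" where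
  "open_fn k s Top = Top"
| "open_fn k s Bot = Bot"
| "open_fn k s (Pred p ts) = Pred p (map (open_tn k s) ts)"
| "open_fn k s (Eq t u) = Eq (open_tn k s t) (open_tn k s u)"
| "open_fn k s (Fresh a t) = Fresh (open_tn k s a) (open_tn k s t)"
| "open_fn k s (Conj \<phi> \<psi>) = Conj (open_fn k s \<phi>) (open_fn k s \<psi>)"
| "open_fn k s (Disj \<phi> \<psi>) = Disj (open_fn k s \<phi>) (open_fn k s \<psi>)"
| "open_fn k s (Imp \<phi> \<psi>) = Imp (open_fn k s \<phi>) (open_fn k s \<psi>)"
| "open_fn k s (All \<tau> \<phi>) = All \<tau> (open_fn k s \<phi>)"
| "open_fn k s (Ex \<tau> \<phi>) = Ex \<tau> (open_fn k s \<phi>)"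
| "open_fn k s (New \<nu> \<phi>) = New \<nu> (open_fn (Suc k) s \<phi>)"

text \<open>phi[t/x] for the body phi of a quantifier, and phi[b/a] for the body of a New.\<close>
abbreviation inst :: "('d, 'n, 'c, 'f, 'p) fm \<Rightarrow> ('c, 'f) tm \<Rightarrow> ('d, 'n, 'c, 'f, 'p) fm" where
  "inst \<phi> t \<equiv> open_fv 0 t \<phi>"

abbreviation inst_nm :: "('d, 'n, 'c, 'f, 'p) fm \<Rightarrow> nat \<Rightarrow> ('d, 'n, 'c, 'f, 'p) fm" where
  "inst_nm \<phi> a \<equiv> open_fn 0 (Nm a) \<phi>"

fun is_atom :: "('d, 'n, 'c, 'f, 'p) fm \<Rightarrow> bool" where
  "is_atom (Pred _ _) = True"
| "is_atom (Eq _ _) = True"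
| "is_atom (Fresh _ _) = True"
| "is_atom _ = False"

section \<open>|Sigma|: the freshness facts recorded by a context\<close>

definition ctx_fresh :: "('c, 'f, 'p, 'd, 'n) signature \<Rightarrow> ('d, 'n) ctx
    \<Rightarrow> ('d, 'n, 'c, 'f, 'p) fm set" where
  "ctx_fresh S \<Sigma> = {Fresh (Nm a) t | a t. \<exists>\<Sigma>1 \<Sigma>2 \<nu> \<tau>.
      \<Sigma> = \<Sigma>1 @ CNm a \<nu> # \<Sigma>2 \<and> tmty S \<Sigma>1 t \<tau>}"

section \<open>Instances of the nonlogical axiom schemes  P1 & ... & Pn \<supset> Q1 | ... | Qm\<close>

text \<open>Swap/eq/fresh are symbols of the signature; E2 is
  read as covering every function symbol with data-type result (including
  swap at a data type) and E3 every predicate symbol (including eq and fresh).\<close>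
inductive nl_axiom :: "('c, 'f, 'p, 'd, 'n) signature \<Rightarrow> ('d, 'n) ctx
    \<Rightarrow> ('d, 'n, 'c, 'f, 'p) fm list \<Rightarrow> ('d, 'n, 'c, 'f, 'p) fm list \<Rightarrow> bool"
  for S :: "('c, 'f, 'p, 'd, 'n) signature" where
  S1: "tmty S \<Sigma> a (TName \<nu>) \<Longrightarrow> tmty S \<Sigma> x \<tau> \<Longrightarrow>
       nl_axiom S \<Sigma> [] [Eq (Swap a a x) x]"
| S2: "tmty S \<Sigma> a (TName \<nu>) \<Longrightarrow> tmty S \<Sigma> b (TName \<nu>) \<Longrightarrow> tmty S \<Sigma> x \<tau> \<Longrightarrow>
       nl_axiom S \<Sigma> [] [Eq (Swap a b (Swap a b x)) x]"
| S3: "tmty S \<Sigma> a (TName \<nu>) \<Longrightarrow> tmty S \<Sigma> b (TName \<nu>) \<Longrightarrow>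
       nl_axiom S \<Sigma> [] [Eq (Swap a b a) b]"
| E1: "tmty S \<Sigma> a (TName \<nu>) \<Longrightarrow> tmty S \<Sigma> b (TName \<nu>) \<Longrightarrow>
       nl_axiom S \<Sigma> [] [Eq (Swap a b (Const c)) (Const c)]"
| E2: "tmty S \<Sigma> a (TName \<nu>) \<Longrightarrow> tmty S \<Sigma> b (TName \<nu>) \<Longrightarrow> tmty S \<Sigma> (Fn f ts) \<tau> \<Longrightarrow>
       nl_axiom S \<Sigma> [] [Eq (Swap a b (Fn f ts)) (Fn f (map (Swap a b) ts))]"
| E2_swap: "tmty S \<Sigma> a (TName \<nu>) \<Longrightarrow> tmty S \<Sigma> b (TName \<nu>) \<Longrightarrow>
       tmty S \<Sigma> (Swap c d t) (TData \<delta>) \<Longrightarrow>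
       nl_axiom S \<Sigma> [] [Eq (Swap a b (Swap c d t)) (Swap (Swap a b c) (Swap a b d) (Swap a b t))]"
| E3: "tmty S \<Sigma> a (TName \<nu>) \<Longrightarrow> tmty S \<Sigma> b (TName \<nu>) \<Longrightarrow> wff S \<Sigma> [] [] (Pred p ts) \<Longrightarrow>
       nl_axiom S \<Sigma> [Pred p ts] [Pred p (map (Swap a b) ts)]"
| E3_eq: "tmty S \<Sigma> a (TName \<nu>) \<Longrightarrow> tmty S \<Sigma> b (TName \<nu>) \<Longrightarrow> wff S \<Sigma> [] [] (Eq t u) \<Longrightarrow>
       nl_axiom S \<Sigma> [Eq t u] [Eq (Swap a b t) (Swap a b u)]"
| E3_fresh: "tmty S \<Sigma> a (TName \<nu>) \<Longrightarrow> tmty S \<Sigma> b (TName \<nu>) \<Longrightarrow> wff S \<Sigma> [] [] (Fresh t u) \<Longrightarrow>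
       nl_axiom S \<Sigma> [Fresh t u] [Fresh (Swap a b t) (Swap a b u)]"
| F1: "tmty S \<Sigma> a (TName \<nu>) \<Longrightarrow> tmty S \<Sigma> b (TName \<nu>) \<Longrightarrow> tmty S \<Sigma> x \<tau> \<Longrightarrow>
       nl_axiom S \<Sigma> [Fresh a x, Fresh b x] [Eq (Swap a b x) x]"
| F2: "tmty S \<Sigma> a (TName \<nu>) \<Longrightarrow> tmty S \<Sigma> b (TName \<nu>') \<Longrightarrow> \<nu> \<noteq> \<nu>' \<Longrightarrow>
       nl_axiom S \<Sigma> [] [Fresh a b]"
| F3: "tmty S \<Sigma> a (TName \<nu>) \<Longrightarrow>
       nl_axiom S \<Sigma> [Fresh a a] []"
| F4: "tmty S \<Sigma> a (TName \<nu>) \<Longrightarrow> tmty S \<Sigma> b (TName \<nu>) \<Longrightarrow>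
       nl_axiom S \<Sigma> [] [Fresh a b, Eq a b]"
| A1: "tmty S \<Sigma> a (TName \<nu>) \<Longrightarrow> tmty S \<Sigma> b (TName \<nu>) \<Longrightarrow> tmty S \<Sigma> x \<tau> \<Longrightarrow> tmty S \<Sigma> y \<tau> \<Longrightarrow>
       nl_axiom S \<Sigma> [Fresh a y, Eq x (Swap a b y)] [Eq (Abst a x) (Abst b y)]"

section \<open>The sequent calculus NL=>\<close>

text \<open>Every sequent of a
  derivation is required to be well-formed (condition wf_seq on each conclusion).
  Contexts are extended on the right: \<Sigma>,x:\<sigma> is \<Sigma> @ [CVar x \<sigma>], \<Sigma>#a:\<nu> is
  \<Sigma> @ [CNm a \<nu>].\<close>
inductive deriv :: "('c, 'f, 'p, 'd, 'n) signature \<Rightarrow> ('d, 'n) ctx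
    \<Rightarrow> ('d, 'n, 'c, 'f, 'p) fm multiset \<Rightarrow> ('d, 'n, 'c, 'f, 'p) fm multiset \<Rightarrow> bool"
  for S :: "('c, 'f, 'p, 'd, 'n) signature" where
  Ax: "wf_seq S \<Sigma> (add_mset P \<Gamma>) (add_mset P \<Delta>) \<Longrightarrow> is_atom P \<Longrightarrow>
       deriv S \<Sigma> (add_mset P \<Gamma>) (add_mset P \<Delta>)"
| TopR: "wf_seq S \<Sigma> \<Gamma> (add_mset Top \<Delta>) \<Longrightarrow> deriv S \<Sigma> \<Gamma> (add_mset Top \<Delta>)"
| BotL: "wf_seq S \<Sigma> (add_mset Bot \<Gamma>) \<Delta> \<Longrightarrow> deriv S \<Sigma> (add_mset Bot \<Gamma>) \<Delta>"
| ConjL: "wf_seq S \<Sigma> (add_mset (Conj \<phi> \<psi>) \<Gamma>) \<Delta> \<Longrightarrow>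
       deriv S \<Sigma> (add_mset \<phi> (add_mset \<psi> \<Gamma>)) \<Delta> \<Longrightarrow>
       deriv S \<Sigma> (add_mset (Conj \<phi> \<psi>) \<Gamma>) \<Delta>"
| ConjR: "wf_seq S \<Sigma> \<Gamma> (add_mset (Conj \<phi> \<psi>) \<Delta>) \<Longrightarrow>
       deriv S \<Sigma> \<Gamma> (add_mset \<phi> \<Delta>) \<Longrightarrow> deriv S \<Sigma> \<Gamma> (add_mset \<psi> \<Delta>) \<Longrightarrow>
       deriv S \<Sigma> \<Gamma> (add_mset (Conj \<phi> \<psi>) \<Delta>)"
| DisjL: "wf_seq S \<Sigma> (add_mset (Disj \<phi> \<psi>) \<Gamma>) \<Delta> \<Longrightarrow>
       deriv S \<Sigma> (add_mset \<phi> \<Gamma>) \<Delta> \<Longrightarrow> deriv S \<Sigma> (add_mset \<psi> \<Gamma>) \<Delta> \<Longrightarrow>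
       deriv S \<Sigma> (add_mset (Disj \<phi> \<psi>) \<Gamma>) \<Delta>"
| DisjR: "wf_seq S \<Sigma> \<Gamma> (add_mset (Disj \<phi> \<psi>) \<Delta>) \<Longrightarrow>
       deriv S \<Sigma> \<Gamma> (add_mset \<phi> (add_mset \<psi> \<Delta>)) \<Longrightarrow>
       deriv S \<Sigma> \<Gamma> (add_mset (Disj \<phi> \<psi>) \<Delta>)"
| ImpL: "wf_seq S \<Sigma> (add_mset (Imp \<phi> \<psi>) \<Gamma>) \<Delta> \<Longrightarrow>
       deriv S \<Sigma> \<Gamma> (add_mset \<phi> \<Delta>) \<Longrightarrow> deriv S \<Sigma> (add_mset \<psi> \<Gamma>) \<Delta> \<Longrightarrow>
       deriv S \<Sigma> (add_mset (Imp \<phi> \<psi>) \<Gamma>) \<Delta>"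
| ImpR: "wf_seq S \<Sigma> \<Gamma> (add_mset (Imp \<phi> \<psi>) \<Delta>) \<Longrightarrow>
       deriv S \<Sigma> (add_mset \<phi> \<Gamma>) (add_mset \<psi> \<Delta>) \<Longrightarrow>
       deriv S \<Sigma> \<Gamma> (add_mset (Imp \<phi> \<psi>) \<Delta>)"
| AllL: "wf_seq S \<Sigma> (add_mset (All \<sigma> \<phi>) \<Gamma>) \<Delta> \<Longrightarrow> tmty S \<Sigma> t \<sigma> \<Longrightarrow>
       deriv S \<Sigma> (add_mset (All \<sigma> \<phi>) (add_mset (inst \<phi> t) \<Gamma>)) \<Delta> \<Longrightarrow>
       deriv S \<Sigma> (add_mset (All \<sigma> \<phi>) \<Gamma>) \<Delta>"
| AllR: "wf_seq S \<Sigma> \<Gamma> (add_mset (All \<sigma> \<phi>) \<Delta>) \<Longrightarrow> \<not> var_in x \<Sigma> \<Longrightarrow>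
       deriv S (\<Sigma> @ [CVar x \<sigma>]) \<Gamma> (add_mset (inst \<phi> (Var x)) \<Delta>) \<Longrightarrow>
       deriv S \<Sigma> \<Gamma> (add_mset (All \<sigma> \<phi>) \<Delta>)"
| ExL: "wf_seq S \<Sigma> (add_mset (Ex \<sigma> \<phi>) \<Gamma>) \<Delta> \<Longrightarrow> \<not> var_in x \<Sigma> \<Longrightarrow>
       deriv S (\<Sigma> @ [CVar x \<sigma>]) (add_mset (inst \<phi> (Var x)) \<Gamma>) \<Delta> \<Longrightarrow>
       deriv S \<Sigma> (add_mset (Ex \<sigma> \<phi>) \<Gamma>) \<Delta>"
| ExR: "wf_seq S \<Sigma> \<Gamma> (add_mset (Ex \<sigma> \<phi>) \<Delta>) \<Longrightarrow> tmty S \<Sigma> t \<sigma> \<Longrightarrow>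
       deriv S \<Sigma> \<Gamma> (add_mset (Ex \<sigma> \<phi>) (add_mset (inst \<phi> t) \<Delta>)) \<Longrightarrow>
       deriv S \<Sigma> \<Gamma> (add_mset (Ex \<sigma> \<phi>) \<Delta>)"
| NewR: "wf_seq S \<Sigma> \<Gamma> (add_mset (New \<nu> \<phi>) \<Delta>) \<Longrightarrow> \<not> nm_in a \<Sigma> \<Longrightarrow>
       deriv S (\<Sigma> @ [CNm a \<nu>]) \<Gamma> (add_mset (inst_nm \<phi> a) \<Delta>) \<Longrightarrow>
       deriv S \<Sigma> \<Gamma> (add_mset (New \<nu> \<phi>) \<Delta>)"
| NewL: "wf_seq S \<Sigma> (add_mset (New \<nu> \<phi>) \<Gamma>) \<Delta> \<Longrightarrow> \<not> nm_in a \<Sigma> \<Longrightarrow>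
       deriv S (\<Sigma> @ [CNm a \<nu>]) (add_mset (inst_nm \<phi> a) \<Gamma>) \<Delta> \<Longrightarrow>
       deriv S \<Sigma> (add_mset (New \<nu> \<phi>) \<Gamma>) \<Delta>"
| EqR: "wf_seq S \<Sigma> \<Gamma> \<Delta> \<Longrightarrow>
       deriv S \<Sigma> (add_mset (Eq t t) \<Gamma>) \<Delta> \<Longrightarrow>
       deriv S \<Sigma> \<Gamma> \<Delta>"
| EqS: "wf_seq S \<Sigma> (add_mset (Eq t u) (add_mset (inst P t) \<Gamma>)) \<Delta> \<Longrightarrow> is_atom P \<Longrightarrow>
       deriv S \<Sigma> (add_mset (Eq t u) (add_mset (inst P t) (add_mset (inst P u) \<Gamma>))) \<Delta> \<Longrightarrow>
       deriv S \<Sigma> (add_mset (Eq t u) (add_mset (inst P t) \<Gamma>)) \<Delta>"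
| Axiom: "wf_seq S \<Sigma> (\<Gamma> + mset Ps) \<Delta> \<Longrightarrow> nl_axiom S \<Sigma> Ps Qs \<Longrightarrow>
       (\<forall>Q \<in> set Qs. deriv S \<Sigma> (add_mset Q (\<Gamma> + mset Ps)) \<Delta>) \<Longrightarrow>
       deriv S \<Sigma> (\<Gamma> + mset Ps) \<Delta>"
| A2: "wf_seq S \<Sigma> (add_mset (Eq (Abst a t) (Abst b u)) \<Gamma>) \<Delta> \<Longrightarrow>
       deriv S \<Sigma> (add_mset (Eq (Abst a t) (Abst b u)) (add_mset (Eq a b) (add_mset (Eq t u) \<Gamma>))) \<Delta> \<Longrightarrow>
       deriv S \<Sigma> (add_mset (Eq (Abst a t) (Abst b u)) (add_mset (Fresh a u) (add_mset (Eq t (Swap a b u)) \<Gamma>))) \<Delta> \<Longrightarrow>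
       deriv S \<Sigma> (add_mset (Eq (Abst a t) (Abst b u)) \<Gamma>) \<Delta>"
| A3: "wf_seq S \<Sigma> \<Gamma> \<Delta> \<Longrightarrow> tmty S \<Sigma> t (TAbs \<nu> \<sigma>) \<Longrightarrow>
       \<not> var_in a \<Sigma> \<Longrightarrow> \<not> var_in x \<Sigma> \<Longrightarrow> a \<noteq> x \<Longrightarrow>
       deriv S (\<Sigma> @ [CVar a (TName \<nu>), CVar x \<sigma>]) (add_mset (Eq t (Abst (Var a) (Var x))) \<Gamma>) \<Delta> \<Longrightarrow>
       deriv S \<Sigma> \<Gamma> \<Delta>"
| FreshNm: "wf_seq S \<Sigma> \<Gamma> \<Delta> \<Longrightarrow> \<not> nm_in a \<Sigma> \<Longrightarrow>
       deriv S (\<Sigma> @ [CNm a \<nu>]) \<Gamma> \<Delta> \<Longrightarrow>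
       deriv S \<Sigma> \<Gamma> \<Delta>"
| CtxFresh: "wf_seq S \<Sigma> \<Gamma> \<Delta> \<Longrightarrow> Fresh (Nm a) t \<in> ctx_fresh S \<Sigma> \<Longrightarrow>
       deriv S \<Sigma> (add_mset (Fresh (Nm a) t) \<Gamma>) \<Delta> \<Longrightarrow>
       deriv S \<Sigma> \<Gamma> \<Delta>"

end

theory Submission
  imports Defs "HOL-Combinatorics.Transposition"
begin

text \<open>The sequent is refuted by a model. Name types are interpreted by infinitely many atoms
  tagged with their type, every data type by a single point, and abstraction types by values
  binding an atom, represented in locally nameless form so that equality of values is
  alpha-equivalence; function symbols denote the point and predicates are true. Atomic formulas
  are then interpreted faithfully enough that every nonlogical axiom and every rule that can end a
  derivation of \<open>\<Sigma>;\<Gamma> \<Rightarrow> \<bottom>\<close> with atomic \<open>\<Gamma>\<close> (\<open>\<approx>R\<close>, \<open>\<approx>S\<close>, the axiom rules, A2, A3, F, \<open>\<Sigma>#\<close>)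
  is sound for valuations respecting the freshness constraints recorded in \<open>\<Sigma>\<close>; the rule F is
  sound because a fresh atom always exists. Hence such a \<open>\<Gamma>\<close> is never satisfied, which is
  absurd for empty \<open>\<Sigma>\<close> and \<open>\<Gamma>\<close>.\<close>

section \<open>Nominal values\<close>

type_synonym 'n name_atom = "'n \<times> nat"

text \<open>\<open>VUnit\<close> is the only value of a data type; \<open>VBound k\<close> is a de Bruijn index referring
  to the \<open>k\<close>-th enclosing \<open>VLam\<close>.\<close>
datatype 'n nval = VAtom "'n name_atom" | VUnit | VBound nat | VLam "'n nval"

fun nval_perm :: "'n name_atom \<Rightarrow> 'n name_atom \<Rightarrow> 'n nval \<Rightarrow> 'n nval" where
  "nval_perm p q (VAtom r) = VAtom (Transposition.transpose p q r)"
| "nval_perm p q VUnit = VUnit"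
| "nval_perm p q (VBound i) = VBound i"
| "nval_perm p q (VLam v) = VLam (nval_perm p q v)"

fun nval_atoms :: "'n nval \<Rightarrow> 'n name_atom set" where
  "nval_atoms (VAtom r) = {r}"
| "nval_atoms VUnit = {}"
| "nval_atoms (VBound i) = {}"
| "nval_atoms (VLam v) = nval_atoms v"

fun nval_close :: "nat \<Rightarrow> 'n name_atom \<Rightarrow> 'n nval \<Rightarrow> 'n nval" where
  "nval_close k p (VAtom r) = (if r = p then VBound k else VAtom r)"
| "nval_close k p VUnit = VUnit"
| "nval_close k p (VBound i) = VBound i"
| "nval_close k p (VLam v) = VLam (nval_close (Suc k) p v)"

fun nval_lc :: "nat \<Rightarrow> 'n nval \<Rightarrow> bool" where
  "nval_lc k (VBound i) \<longleftrightarrow> i < k"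
| "nval_lc k (VLam v) \<longleftrightarrow> nval_lc (Suc k) v"
| "nval_lc k _ \<longleftrightarrow> True"

lemma finite_nval_atoms [simp]: "finite (nval_atoms v)"
  by (induction v) auto

lemma nval_atoms_perm [simp]: "nval_atoms (nval_perm p q v) = Transposition.transpose p q ` nval_atoms v"
  by (induction v) auto

lemma nval_atoms_close [simp]: "nval_atoms (nval_close k p v) = nval_atoms v - {p}"
  by (induction v arbitrary: k) auto

lemma nval_perm_same [simp]: "nval_perm p p v = v"
  by (induction v) auto

lemma nval_perm_involutory [simp]: "nval_perm p q (nval_perm p q v) = v"
  by (induction v) auto

lemma nval_perm_fresh: "p \<notin> nval_atoms v \<Longrightarrow> q \<notin> nval_atoms v \<Longrightarrow> nval_perm p q v = v"
  by (induction v) auto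

lemma nval_perm_perm:
  "nval_perm p q (nval_perm c d v) =
     nval_perm (Transposition.transpose p q c) (Transposition.transpose p q d) (nval_perm p q v)"
  by (induction v) (auto simp: transpose_def)

lemma nval_perm_close:
  "nval_perm p q (nval_close k r v) = nval_close k (Transposition.transpose p q r) (nval_perm p q v)"
  by (induction v arbitrary: k) (auto simp: transpose_eq_iff)

lemma nval_lc_perm [simp]: "nval_lc k (nval_perm p q v) = nval_lc k v"
  by (induction v arbitrary: k) auto

lemma nval_lc_close: "nval_lc k v \<Longrightarrow> nval_lc (Suc k) (nval_close k p v)"
  by (induction v arbitrary: k) auto

lemma nval_close_inj: "nval_close k p v = nval_close k p w \<Longrightarrow> nval_lc k v \<Longrightarrow> nval_lc k w \<Longrightarrow> v = w"
  by (induction v arbitrary: w k; case_tac w) (auto split: if_splits)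

lemma nval_close_eq_close_iff:
  assumes "nval_lc k T" "nval_lc k U"
  shows "nval_close k p T = nval_close k q U \<longleftrightarrow>
    (p = q \<and> T = U) \<or> (p \<notin> nval_atoms U \<and> T = nval_perm p q U)"
proof
  assume eq: "nval_close k p T = nval_close k q U"
  show "(p = q \<and> T = U) \<or> (p \<notin> nval_atoms U \<and> T = nval_perm p q U)"
  proof (cases "p = q")
    case True
    then show ?thesis using nval_close_inj[OF _ assms] eq by simp
  next
    case False
    have "nval_atoms T - {p} = nval_atoms U - {q}" using arg_cong[OF eq, of nval_atoms] by simp
    with False have pU: "p \<notin> nval_atoms U" and qT: "q \<notin> nval_atoms T" by blast+
    have "nval_close k p (nval_perm p q U) = nval_perm p q (nval_close k q U)"
      by (simp add: nval_perm_close)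
    also have "\<dots> = nval_perm p q (nval_close k p T)" using eq by simp
    also have "\<dots> = nval_close k p T" using qT by (intro nval_perm_fresh) auto
    finally have "T = nval_perm p q U" using nval_close_inj assms by (metis nval_lc_perm)
    with pU show ?thesis by blast
  qed
next
  assume "(p = q \<and> T = U) \<or> (p \<notin> nval_atoms U \<and> T = nval_perm p q U)"
  then show "nval_close k p T = nval_close k q U"
  proof
    assume "p \<notin> nval_atoms U \<and> T = nval_perm p q U"
    then have "nval_close k p T = nval_perm p q (nval_close k q U)" by (simp add: nval_perm_close)
    also have "\<dots> = nval_close k q U" using \<open>p \<notin> nval_atoms U \<and> _\<close> by (intro nval_perm_fresh) auto
    finally show ?thesis .
  qed simp
qed

section \<open>Interpretation of terms and atomic formulas\<close>

definition sem_swap :: "'n nval \<Rightarrow> 'n nval \<Rightarrow> 'n nval \<Rightarrow> 'n nval" where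
  "sem_swap A B v = (case (A, B) of (VAtom p, VAtom q) \<Rightarrow> nval_perm p q v | _ \<Rightarrow> v)"

definition sem_abs :: "'n nval \<Rightarrow> 'n nval \<Rightarrow> 'n nval" where
  "sem_abs A v = (case A of VAtom p \<Rightarrow> VLam (nval_close 0 p v) | _ \<Rightarrow> VUnit)"

definition sem_fresh :: "'n nval \<Rightarrow> 'n nval \<Rightarrow> bool" where
  "sem_fresh A v \<longleftrightarrow> (case A of VAtom p \<Rightarrow> p \<notin> nval_atoms v | _ \<Rightarrow> False)"

fun in_dom :: "'n nval \<Rightarrow> ('d, 'n) ty \<Rightarrow> bool" where
  "in_dom v (TData d) \<longleftrightarrow> v = VUnit"
| "in_dom v (TName \<nu>) \<longleftrightarrow> (\<exists>n. v = VAtom (\<nu>, n))"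
| "in_dom v (TAbs \<nu> \<tau>) \<longleftrightarrow> (\<exists>n x. in_dom x \<tau> \<and> v = VLam (nval_close 0 (\<nu>, n) x))"

lemma sem_swap_same [simp]: "sem_swap A A v = v"
  by (cases A) (auto simp: sem_swap_def)

lemma sem_swap_VUnit [simp]: "sem_swap A B VUnit = VUnit"
  by (cases A; cases B) (auto simp: sem_swap_def)

lemma sem_swap_involutory [simp]: "sem_swap A B (sem_swap A B v) = v"
  by (cases A; cases B) (auto simp: sem_swap_def)

lemma sem_swap_VAtom [simp]: "sem_swap (VAtom p) (VAtom q) v = nval_perm p q v"
  by (simp add: sem_swap_def)

lemma sem_swap_non_atoms: "\<nexists>p q. A = VAtom p \<and> B = VAtom q \<Longrightarrow> sem_swap A B v = v"
  by (cases A; cases B) (auto simp: sem_swap_def)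

lemma nval_perm_sem_swap:
  "nval_perm p q (sem_swap C D v) = sem_swap (nval_perm p q C) (nval_perm p q D) (nval_perm p q v)"
  by (cases C; cases D) (simp_all add: sem_swap_def nval_perm_perm[of p q])

lemma sem_swap_sem_swap:
  "sem_swap A B (sem_swap C D v) = sem_swap (sem_swap A B C) (sem_swap A B D) (sem_swap A B v)"
proof (cases "\<exists>p q. A = VAtom p \<and> B = VAtom q")
  case True
  then show ?thesis by (auto simp: nval_perm_sem_swap)
qed (simp add: sem_swap_non_atoms)

lemma sem_fresh_sem_swap: "sem_fresh A v \<Longrightarrow> sem_fresh (sem_swap B C A) (sem_swap B C v)"
  by (cases A; cases B; cases C) (auto simp: sem_swap_def sem_fresh_def dest: transpose_eq_imp_eq)

lemma sem_swap_fresh: "sem_fresh A v \<Longrightarrow> sem_fresh B v \<Longrightarrow> sem_swap A B v = v"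
  by (cases A; cases B) (auto simp: sem_swap_def sem_fresh_def nval_perm_fresh)

lemma sem_abs_eq_iff:
  assumes "nval_lc 0 T" "nval_lc 0 U"
  shows "sem_abs (VAtom p) T = sem_abs (VAtom q) U \<longleftrightarrow>
    (p = q \<and> T = U) \<or> (sem_fresh (VAtom p) U \<and> T = nval_perm p q U)"
  using nval_close_eq_close_iff[OF assms] by (simp add: sem_abs_def sem_fresh_def)

lemma in_dom_lc: "in_dom v \<tau> \<Longrightarrow> nval_lc 0 v"
  by (induction \<tau> arbitrary: v) (auto intro!: nval_lc_close)

lemma in_dom_perm:
  assumes "fst p = fst q" "in_dom v \<tau>"
  shows "in_dom (nval_perm p q v) \<tau>"
  using assms(2)
proof (induction \<tau> arbitrary: v)
  case (TName \<nu>)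
  then show ?case using assms(1) by (auto simp: transpose_def prod_eq_iff)
next
  case (TAbs \<nu> \<tau>)
  then obtain n x where x: "in_dom x \<tau>" "v = VLam (nval_close 0 (\<nu>, n) x)" by auto
  obtain m where "Transposition.transpose p q (\<nu>, n) = (\<nu>, m)"
    using assms(1) by (auto simp: transpose_def prod_eq_iff)
  with x TAbs.IH show ?case by (auto simp: nval_perm_close)
qed simp

text \<open>A valuation \<open>\<rho>\<close> assigns values to variables \<open>Inl x\<close> and to name-symbols \<open>Inr a\<close>,
  matching the tags of \<open>entry_sym\<close>. Bound indices never occur at the top level of a sequent
  and are evaluated to the junk value \<open>VUnit\<close>.\<close>
fun eval :: "(nat + nat \<Rightarrow> 'n nval) \<Rightarrow> ('c, 'f) tm \<Rightarrow> 'n nval" where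
  "eval \<rho> (Var x) = \<rho> (Inl x)"
| "eval \<rho> (Nm a) = \<rho> (Inr a)"
| "eval \<rho> (BVar i) = VUnit"
| "eval \<rho> (BNm i) = VUnit"
| "eval \<rho> (Const c) = VUnit"
| "eval \<rho> (Fn f ts) = VUnit"
| "eval \<rho> (Swap a b t) = sem_swap (eval \<rho> a) (eval \<rho> b) (eval \<rho> t)"
| "eval \<rho> (Abst a t) = sem_abs (eval \<rho> a) (eval \<rho> t)"

fun sat :: "(nat + nat \<Rightarrow> 'n nval) \<Rightarrow> ('d, 'n, 'c, 'f, 'p) fm \<Rightarrow> bool" where
  "sat \<rho> (Pred p ts) \<longleftrightarrow> True"
| "sat \<rho> (Eq t u) \<longleftrightarrow> eval \<rho> t = eval \<rho> u"
| "sat \<rho> (Fresh a t) \<longleftrightarrow> sem_fresh (eval \<rho> a) (eval \<rho> t)"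
| "sat \<rho> _ \<longleftrightarrow> False"

lemma eval_open_tv_cong:
  "eval \<rho> s = eval \<rho> s' \<Longrightarrow> eval \<rho> (open_tv k s t) = eval \<rho> (open_tv k s' t)"
  by (induction t) auto

lemma sat_open_fv_cong:
  assumes "is_atom P" "eval \<rho> s = eval \<rho> s'"
  shows "sat \<rho> (open_fv k s P) = sat \<rho> (open_fv k s' P)"
  using assms by (cases P) (simp_all add: eval_open_tv_cong[of \<rho> s s'])

lemma is_atom_open_fv: "is_atom P \<Longrightarrow> is_atom (open_fv k s P)"
  by (cases P) auto

section \<open>Valuations respecting a context\<close>

fun entry_ty :: "('d, 'n) centry \<Rightarrow> ('d, 'n) ty" where
  "entry_ty (CVar x \<tau>) = \<tau>"
| "entry_ty (CNm a \<nu>) = TName \<nu>"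

fun fresh_for_prefix :: "(nat + nat \<Rightarrow> 'n nval) \<Rightarrow> ('d, 'n) centry \<Rightarrow> ('d, 'n) ctx \<Rightarrow> bool" where
  "fresh_for_prefix \<rho> (CNm a \<nu>) \<Sigma> \<longleftrightarrow> (\<forall>e \<in> set \<Sigma>. sem_fresh (\<rho> (Inr a)) (\<rho> (entry_sym e)))"
| "fresh_for_prefix \<rho> (CVar x \<tau>) \<Sigma> \<longleftrightarrow> True"

definition admissible :: "('d, 'n) ctx \<Rightarrow> (nat + nat \<Rightarrow> 'n nval) \<Rightarrow> bool" where
  "admissible \<Sigma> \<rho> \<longleftrightarrow> (\<forall>e \<in> set \<Sigma>. in_dom (\<rho> (entry_sym e)) (entry_ty e))
    \<and> (\<forall>\<Sigma>1 e \<Sigma>2. \<Sigma> = \<Sigma>1 @ e # \<Sigma>2 \<longrightarrow> fresh_for_prefix \<rho> e \<Sigma>1)"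

lemma admissible_Nil: "admissible [] \<rho>"
  by (simp add: admissible_def)

lemma all_decomp_snoc_iff:
  "(\<forall>xs y ys. zs @ [z] = xs @ y # ys \<longrightarrow> P xs y) \<longleftrightarrow>
    (\<forall>xs y ys. zs = xs @ y # ys \<longrightarrow> P xs y) \<and> P zs z"
proof (intro iffI conjI allI impI)
  fix xs y ys
  assume "\<forall>xs y ys. zs @ [z] = xs @ y # ys \<longrightarrow> P xs y" and "zs = xs @ y # ys"
  then show "P xs y" by (metis append.assoc append_Cons)
next
  assume "\<forall>xs y ys. zs @ [z] = xs @ y # ys \<longrightarrow> P xs y"
  then show "P zs z" by blast
next
  fix xs y ys
  assume H: "(\<forall>xs y ys. zs = xs @ y # ys \<longrightarrow> P xs y) \<and> P zs z" and eq: "zs @ [z] = xs @ y # ys"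
  show "P xs y"
  proof (cases ys rule: rev_cases)
    case Nil
    then show ?thesis using H eq by simp
  next
    case (snoc ys' w)
    then show ?thesis using H eq by (metis append.assoc append1_eq_conv append_Cons)
  qed
qed

lemma admissible_snoc:
  "admissible (\<Sigma> @ [e]) \<rho> \<longleftrightarrow>
    admissible \<Sigma> \<rho> \<and> in_dom (\<rho> (entry_sym e)) (entry_ty e) \<and> fresh_for_prefix \<rho> e \<Sigma>"
  unfolding admissible_def all_decomp_snoc_iff by auto

lemma fresh_for_prefix_cong:
  "\<forall>e' \<in> set (e # \<Sigma>). \<rho> (entry_sym e') = \<rho>' (entry_sym e') \<Longrightarrow>
    fresh_for_prefix \<rho> e \<Sigma> = fresh_for_prefix \<rho>' e \<Sigma>"
  by (cases e) auto

lemma admissible_cong: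
  assumes "\<forall>e \<in> set \<Sigma>. \<rho> (entry_sym e) = \<rho>' (entry_sym e)"
  shows "admissible \<Sigma> \<rho> = admissible \<Sigma> \<rho>'"
proof -
  have "fresh_for_prefix \<rho> e \<Sigma>1 = fresh_for_prefix \<rho>' e \<Sigma>1" if "\<Sigma> = \<Sigma>1 @ e # \<Sigma>2" for \<Sigma>1 e \<Sigma>2
    using assms that by (intro fresh_for_prefix_cong) auto
  with assms show ?thesis unfolding admissible_def by simp
qed

lemma admissible_fun_upd:
  "k \<notin> entry_sym ` set \<Sigma> \<Longrightarrow> admissible \<Sigma> (\<rho>(k := v)) = admissible \<Sigma> \<rho>"
  by (rule admissible_cong) auto

lemma ex_fresh_name_atom: "finite (A :: 'n name_atom set) \<Longrightarrow> \<exists>n. (\<nu>, n) \<notin> A"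
  using ex_new_if_finite[OF infinite_UNIV_nat, of "snd ` A"] by force

lemma admissible_extend_var:
  assumes "admissible \<Sigma> \<rho>" "\<not> var_in x \<Sigma>" "in_dom v \<tau>"
  shows "admissible (\<Sigma> @ [CVar x \<tau>]) (\<rho>(Inl x := v))"
proof -
  have "Inl x \<notin> entry_sym ` set \<Sigma>"
    using assms(2) by (simp add: var_in_def)
  with assms show ?thesis by (simp add: admissible_snoc admissible_fun_upd)
qed

lemma admissible_extend_nm:
  assumes "admissible \<Sigma> \<rho>" "\<not> nm_in a \<Sigma>"
  shows "\<exists>n. admissible (\<Sigma> @ [CNm a \<nu>]) (\<rho>(Inr a := VAtom (\<nu>, n)))"
proof -
  obtain n where n: "(\<nu>, n) \<notin> (\<Union>e \<in> set \<Sigma>. nval_atoms (\<rho> (entry_sym e)))"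
    using ex_fresh_name_atom by (metis finite_UN_I finite_nval_atoms finite_set)
  have "Inr a \<notin> entry_sym ` set \<Sigma>"
    using assms(2) by (simp add: nm_in_def)
  then have "admissible (\<Sigma> @ [CNm a \<nu>]) (\<rho>(Inr a := VAtom (\<nu>, n)))"
    using assms(1) n by (auto simp: admissible_snoc admissible_fun_upd sem_fresh_def image_iff)
  then show ?thesis ..
qed

lemma eval_in_dom:
  "has_ty S \<Sigma> Bv Bn t \<tau> \<Longrightarrow> Bv = [] \<Longrightarrow> Bn = [] \<Longrightarrow> admissible \<Sigma> \<rho> \<Longrightarrow> in_dom (eval \<rho> t) \<tau>"
proof (induction rule: has_ty.induct)
  case (T_Var x \<tau> \<Sigma> Bv Bn)
  then show ?case by (force simp: admissible_def)
next
  case (T_Nm a \<nu> \<Sigma> Bv Bn)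
  then show ?case by (force simp: admissible_def)
next
  case (T_Swap \<Sigma> Bv Bn a \<nu> b t \<tau>)
  then obtain n m where "eval \<rho> a = VAtom (\<nu>, n)" "eval \<rho> b = VAtom (\<nu>, m)" by auto
  with T_Swap show ?case by (simp add: in_dom_perm)
next
  case (T_Abst \<Sigma> Bv Bn a \<nu> t \<tau>)
  then obtain n where "eval \<rho> a = VAtom (\<nu>, n)" by auto
  with T_Abst show ?case by (auto simp: sem_abs_def)
qed auto

lemma eval_name:
  "tmty S \<Sigma> a (TName \<nu>) \<Longrightarrow> admissible \<Sigma> \<rho> \<Longrightarrow> \<exists>n. eval \<rho> a = VAtom (\<nu>, n)"
  using eval_in_dom by fastforce

lemma eval_cong:
  "has_ty S \<Sigma> Bv Bn t \<tau> \<Longrightarrow> \<forall>e \<in> set \<Sigma>. \<rho> (entry_sym e) = \<rho>' (entry_sym e) \<Longrightarrow>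
    eval \<rho> t = eval \<rho>' t"
  by (induction rule: has_ty.induct) force+

lemma sat_cong:
  "wff S \<Sigma> Bv Bn \<phi> \<Longrightarrow> \<forall>e \<in> set \<Sigma>. \<rho> (entry_sym e) = \<rho>' (entry_sym e) \<Longrightarrow>
    sat \<rho> \<phi> = sat \<rho>' \<phi>"
  by (induction rule: wff.induct) (simp_all add: eval_cong[where \<rho> = \<rho> and \<rho>' = \<rho>'])

lemma eval_fresh_atom:
  "has_ty S \<Sigma> Bv Bn t \<tau> \<Longrightarrow> \<forall>e \<in> set \<Sigma>. p \<notin> nval_atoms (\<rho> (entry_sym e)) \<Longrightarrow>
    p \<notin> nval_atoms (eval \<rho> t)"
proof (induction rule: has_ty.induct)
  case (T_Swap \<Sigma> Bv Bn a \<nu> b t \<tau>)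
  then show ?case by (auto simp: sem_swap_def transpose_eq_iff split: nval.splits)
next
  case (T_Abst \<Sigma> Bv Bn a \<nu> t \<tau>)
  then show ?case by (auto simp: sem_abs_def split: nval.splits)
qed force+

lemma sat_ctx_fresh: "admissible \<Sigma> \<rho> \<Longrightarrow> \<phi> \<in> ctx_fresh S \<Sigma> \<Longrightarrow> sat \<rho> \<phi>"
proof -
  assume adm: "admissible \<Sigma> \<rho>" and "\<phi> \<in> ctx_fresh S \<Sigma>"
  then obtain a t \<Sigma>1 \<Sigma>2 \<nu> \<tau> where \<phi>: "\<phi> = Fresh (Nm a) t" and
    \<Sigma>: "\<Sigma> = \<Sigma>1 @ CNm a \<nu> # \<Sigma>2" and t: "tmty S \<Sigma>1 t \<tau>"
    by (auto simp: ctx_fresh_def)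
  from adm \<Sigma> obtain n where a: "\<rho> (Inr a) = VAtom (\<nu>, n)"
    and "fresh_for_prefix \<rho> (CNm a \<nu>) \<Sigma>1"
    unfolding admissible_def by force
  then have "\<forall>e \<in> set \<Sigma>1. (\<nu>, n) \<notin> nval_atoms (\<rho> (entry_sym e))"
    by (simp add: sem_fresh_def)
  with t show ?thesis using eval_fresh_atom a \<phi> by (simp add: sem_fresh_def)
qed

section \<open>Soundness\<close>

lemma nl_axiom_sound:
  assumes "nl_axiom S \<Sigma> Ps Qs" "admissible \<Sigma> \<rho>" "\<forall>P \<in> set Ps. sat \<rho> P"
  shows "\<exists>Q \<in> set Qs. sat \<rho> Q"
  using assms
proof (induction rule: nl_axiom.induct)
  case (S3 \<Sigma> a \<nu> b)
  then obtain n m where "eval \<rho> a = VAtom (\<nu>, n)" "eval \<rho> b = VAtom (\<nu>, m)"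
    by (meson eval_name)
  then show ?case by simp
next
  case (E2_swap \<Sigma> a \<nu> b c d t \<delta>)
  show ?case by (simp, rule sem_swap_sem_swap)
next
  case (E3_fresh \<Sigma> a \<nu> b t u)
  then show ?case by (simp add: sem_fresh_sem_swap)
next
  case (F1 \<Sigma> a \<nu> b x \<tau>)
  then show ?case by (simp add: sem_swap_fresh)
next
  case (F2 \<Sigma> a \<nu> b \<nu>')
  then obtain n m where "eval \<rho> a = VAtom (\<nu>, n)" "eval \<rho> b = VAtom (\<nu>', m)"
    by (meson eval_name)
  with F2 show ?case by (simp add: sem_fresh_def)
next
  case (F3 \<Sigma> a \<nu>)
  then show ?case by (auto simp: sem_fresh_def split: nval.splits)
next
  case (F4 \<Sigma> a \<nu> b)
  then obtain n m where "eval \<rho> a = VAtom (\<nu>, n)" "eval \<rho> b = VAtom (\<nu>, m)"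
    by (meson eval_name)
  then show ?case by (auto simp: sem_fresh_def)
next
  case (A1 \<Sigma> a \<nu> b x \<tau> y)
  obtain n m where ab: "eval \<rho> a = VAtom (\<nu>, n)" "eval \<rho> b = VAtom (\<nu>, m)"
    using A1 by (meson eval_name)
  have "nval_lc 0 (eval \<rho> y)"
    using eval_in_dom[OF A1(4)] A1.prems(1) in_dom_lc by blast
  with A1.prems(2) ab show ?case by (auto simp: sem_abs_eq_iff)
qed simp_all

lemma nl_axiom_conclusions_atomic: "nl_axiom S \<Sigma> Ps Qs \<Longrightarrow> \<forall>Q \<in> set Qs. is_atom Q"
  by (induction rule: nl_axiom.induct) auto

definition unsatisfiable :: "('d, 'n) ctx \<Rightarrow> ('d, 'n, 'c, 'f, 'p) fm multiset \<Rightarrow> bool" where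
  "unsatisfiable \<Sigma> \<Gamma> \<longleftrightarrow> (\<forall>\<rho>. admissible \<Sigma> \<rho> \<longrightarrow> (\<exists>\<phi> \<in># \<Gamma>. \<not> sat \<rho> \<phi>))"

lemma unsatisfiable_EqR: "unsatisfiable \<Sigma> (add_mset (Eq t t) \<Gamma>) \<Longrightarrow> unsatisfiable \<Sigma> \<Gamma>"
  by (auto simp: unsatisfiable_def)

lemma unsatisfiable_EqS:
  assumes "is_atom P"
    and "unsatisfiable \<Sigma> (add_mset (Eq t u) (add_mset (inst P t) (add_mset (inst P u) \<Gamma>)))"
  shows "unsatisfiable \<Sigma> (add_mset (Eq t u) (add_mset (inst P t) \<Gamma>))"
  unfolding unsatisfiable_def
proof (intro allI impI)
  fix \<rho>
  assume "admissible \<Sigma> \<rho>"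
  with assms(2) obtain \<phi> where
    \<phi>: "\<phi> \<in># add_mset (Eq t u) (add_mset (inst P t) (add_mset (inst P u) \<Gamma>))" "\<not> sat \<rho> \<phi>"
    unfolding unsatisfiable_def by blast
  then show "\<exists>\<phi> \<in># add_mset (Eq t u) (add_mset (inst P t) \<Gamma>). \<not> sat \<rho> \<phi>"
    using sat_open_fv_cong[OF assms(1), of \<rho> t u] by (cases "eval \<rho> t = eval \<rho> u") auto
qed

lemma unsatisfiable_axiom:
  assumes "nl_axiom S \<Sigma> Ps Qs" and "\<forall>Q \<in> set Qs. unsatisfiable \<Sigma> (add_mset Q (\<Gamma> + mset Ps))"
  shows "unsatisfiable \<Sigma> (\<Gamma> + mset Ps)"
  unfolding unsatisfiable_def
proof (intro allI impI)
  fix \<rho>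
  assume adm: "admissible \<Sigma> \<rho>"
  show "\<exists>\<phi> \<in># \<Gamma> + mset Ps. \<not> sat \<rho> \<phi>"
  proof (rule ccontr)
    assume hold: "\<not> ?thesis"
    then obtain Q where "Q \<in> set Qs" "sat \<rho> Q"
      using nl_axiom_sound[OF assms(1) adm] by auto
    with assms(2) adm hold show False unfolding unsatisfiable_def by auto
  qed
qed

inductive_cases wff_EqE: "wff S \<Sigma> Bv Bn (Eq t u)"
inductive_cases has_ty_AbstE: "has_ty S \<Sigma> Bv Bn (Abst a t) \<tau>"

lemma unsatisfiable_A2:
  assumes "wff S \<Sigma> [] [] (Eq (Abst a t) (Abst b u))"
    and "unsatisfiable \<Sigma> (add_mset (Eq (Abst a t) (Abst b u)) (add_mset (Eq a b) (add_mset (Eq t u) \<Gamma>)))"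
    and "unsatisfiable \<Sigma> (add_mset (Eq (Abst a t) (Abst b u))
           (add_mset (Fresh a u) (add_mset (Eq t (Swap a b u)) \<Gamma>)))"
  shows "unsatisfiable \<Sigma> (add_mset (Eq (Abst a t) (Abst b u)) \<Gamma>)"
  unfolding unsatisfiable_def
proof (intro allI impI)
  fix \<rho>
  assume adm: "admissible \<Sigma> \<rho>"
  from assms(1) obtain \<nu> \<nu>' \<tau> \<tau>' where ty: "tmty S \<Sigma> a (TName \<nu>)" "tmty S \<Sigma> t \<tau>"
      "tmty S \<Sigma> b (TName \<nu>')" "tmty S \<Sigma> u \<tau>'"
    by (auto elim!: wff_EqE has_ty_AbstE)
  obtain n m where ab: "eval \<rho> a = VAtom (\<nu>, n)" "eval \<rho> b = VAtom (\<nu>', m)"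
    using ty(1,3) adm by (meson eval_name)
  have lc: "nval_lc 0 (eval \<rho> t)" "nval_lc 0 (eval \<rho> u)"
    using ty(2,4) adm by (meson eval_in_dom in_dom_lc)+
  show "\<exists>\<phi> \<in># add_mset (Eq (Abst a t) (Abst b u)) \<Gamma>. \<not> sat \<rho> \<phi>"
  proof (rule ccontr)
    assume "\<not> ?thesis"
    then have hold: "sat \<rho> (Eq (Abst a t) (Abst b u))" "\<forall>\<phi> \<in># \<Gamma>. sat \<rho> \<phi>" by auto
    from hold(1) consider
        "(\<nu>, n) = (\<nu>', m)" "eval \<rho> t = eval \<rho> u"
      | "sem_fresh (VAtom (\<nu>, n)) (eval \<rho> u)" "eval \<rho> t = nval_perm (\<nu>, n) (\<nu>', m) (eval \<rho> u)"
      using ab sem_abs_eq_iff[OF lc] by auto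
    then show False
      using assms(2,3) adm hold ab unfolding unsatisfiable_def by cases auto
  qed
qed

lemma unsatisfiable_A3:
  assumes "tmty S \<Sigma> t (TAbs \<nu> \<sigma>)" and "\<not> var_in a \<Sigma>" "\<not> var_in x \<Sigma>" "a \<noteq> x"
    and "\<forall>\<phi> \<in># \<Gamma>. wff S \<Sigma> [] [] \<phi>"
    and "unsatisfiable (\<Sigma> @ [CVar a (TName \<nu>), CVar x \<sigma>]) (add_mset (Eq t (Abst (Var a) (Var x))) \<Gamma>)"
  shows "unsatisfiable \<Sigma> \<Gamma>"
  unfolding unsatisfiable_def
proof (intro allI impI)
  fix \<rho>
  assume adm: "admissible \<Sigma> \<rho>"
  obtain n y where y: "in_dom y \<sigma>" "eval \<rho> t = VLam (nval_close 0 (\<nu>, n) y)"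
    using eval_in_dom[OF assms(1) _ _ adm] by auto
  define \<rho>' where "\<rho>' = \<rho>(Inl a := VAtom (\<nu>, n), Inl x := y)"
  have "admissible (\<Sigma> @ [CVar a (TName \<nu>)]) (\<rho>(Inl a := VAtom (\<nu>, n)))"
    using admissible_extend_var[OF adm assms(2)] by simp
  moreover have "\<not> var_in x (\<Sigma> @ [CVar a (TName \<nu>)])"
    using assms(3,4) by (simp add: var_in_def)
  ultimately have "admissible (\<Sigma> @ [CVar a (TName \<nu>), CVar x \<sigma>]) \<rho>'"
    using admissible_extend_var y(1) by (fastforce simp: \<rho>'_def)
  then obtain \<phi> where \<phi>: "\<phi> \<in># add_mset (Eq t (Abst (Var a) (Var x))) \<Gamma>" "\<not> sat \<rho>' \<phi>"
    using assms(6) unfolding unsatisfiable_def by blast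
  have agree: "\<forall>e \<in> set \<Sigma>. \<rho>' (entry_sym e) = \<rho> (entry_sym e)"
    using assms(2,3) by (force simp: \<rho>'_def var_in_def)
  have "\<rho>' (Inl a) = VAtom (\<nu>, n)" "\<rho>' (Inl x) = y"
    using assms(4) by (simp_all add: \<rho>'_def)
  then have "sat \<rho>' (Eq t (Abst (Var a) (Var x)))"
    using y(2) eval_cong[OF assms(1) agree] by (simp add: sem_abs_def)
  with \<phi> have "\<phi> \<in># \<Gamma>" by auto
  then show "\<exists>\<phi> \<in># \<Gamma>. \<not> sat \<rho> \<phi>"
    using \<phi>(2) assms(5) sat_cong[OF _ agree] by blast
qed

lemma unsatisfiable_fresh_name:
  assumes "\<not> nm_in a \<Sigma>" and "\<forall>\<phi> \<in># \<Gamma>. wff S \<Sigma> [] [] \<phi>" and "unsatisfiable (\<Sigma> @ [CNm a \<nu>]) \<Gamma>"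
  shows "unsatisfiable \<Sigma> \<Gamma>"
  unfolding unsatisfiable_def
proof (intro allI impI)
  fix \<rho>
  assume "admissible \<Sigma> \<rho>"
  then obtain n where "admissible (\<Sigma> @ [CNm a \<nu>]) (\<rho>(Inr a := VAtom (\<nu>, n)))"
    using admissible_extend_nm[OF _ assms(1)] by blast
  then obtain \<phi> where \<phi>: "\<phi> \<in># \<Gamma>" "\<not> sat (\<rho>(Inr a := VAtom (\<nu>, n))) \<phi>"
    using assms(3) unfolding unsatisfiable_def by blast
  have "\<forall>e \<in> set \<Sigma>. (\<rho>(Inr a := VAtom (\<nu>, n))) (entry_sym e) = \<rho> (entry_sym e)"
    using assms(1) by (force simp: nm_in_def)
  then show "\<exists>\<phi> \<in># \<Gamma>. \<not> sat \<rho> \<phi>"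
    using \<phi> assms(2) sat_cong by blast
qed

lemma unsatisfiable_ctx_fresh:
  assumes "\<phi> \<in> ctx_fresh S \<Sigma>" and "unsatisfiable \<Sigma> (add_mset \<phi> \<Gamma>)"
  shows "unsatisfiable \<Sigma> \<Gamma>"
  unfolding unsatisfiable_def
proof (intro allI impI)
  fix \<rho>
  assume adm: "admissible \<Sigma> \<rho>"
  then have "sat \<rho> \<phi>" using sat_ctx_fresh assms(1) by blast
  moreover have "\<exists>\<psi> \<in># add_mset \<phi> \<Gamma>. \<not> sat \<rho> \<psi>" using adm assms(2) unfolding unsatisfiable_def by blast
  ultimately show "\<exists>\<psi> \<in># \<Gamma>. \<not> sat \<rho> \<psi>" by auto
qed

text \<open>With \<open>\<bottom>\<close> on the right and only atoms on the left, no logical rule can end a derivation.\<close>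
lemma deriv_bot_unsatisfiable:
  "deriv S \<Sigma> \<Gamma> \<Delta> \<Longrightarrow> \<Delta> = {#Bot#} \<Longrightarrow> \<forall>\<phi> \<in># \<Gamma>. is_atom \<phi> \<Longrightarrow> unsatisfiable \<Sigma> \<Gamma>"
proof (induction rule: deriv.induct)
  case (EqR \<Sigma> \<Gamma> \<Delta> t)
  show ?case by (rule unsatisfiable_EqR) (use EqR in simp)
next
  case (EqS \<Sigma> t u P \<Gamma> \<Delta>)
  show ?case
    by (rule unsatisfiable_EqS[OF EqS.hyps(2)]) (use EqS is_atom_open_fv[OF EqS.hyps(2)] in simp)
next
  case (Axiom \<Sigma> \<Gamma> Ps \<Delta> Qs)
  show ?case
    by (rule unsatisfiable_axiom[OF Axiom.hyps(2)])
      (use Axiom nl_axiom_conclusions_atomic[OF Axiom.hyps(2)] in auto)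
next
  case (A2 \<Sigma> a t b u \<Gamma> \<Delta>)
  show ?case by (rule unsatisfiable_A2[where S = S]) (use A2 in \<open>simp_all add: wf_seq_def\<close>)
next
  case (A3 \<Sigma> \<Gamma> \<Delta> t \<nu> \<sigma> a x)
  show ?case by (rule unsatisfiable_A3[where S = S]) (use A3 in \<open>simp_all add: wf_seq_def\<close>)
next
  case (FreshNm \<Sigma> \<Gamma> \<Delta> a \<nu>)
  show ?case by (rule unsatisfiable_fresh_name[where S = S]) (use FreshNm in \<open>simp_all add: wf_seq_def\<close>)
next
  case (CtxFresh \<Sigma> \<Gamma> \<Delta> a t)
  show ?case by (rule unsatisfiable_ctx_fresh[where S = S]) (use CtxFresh in simp_all)
qed simp_all

theorem mainTheorem2:
  fixes S :: "('c, 'f, 'p, 'd, 'n) signature"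
  shows "\<not> deriv S [] {#} {#Bot#}"
proof
  assume "deriv S [] {#} {#Bot#}"
  then have "unsatisfiable [] ({#} :: ('d, 'n, 'c, 'f, 'p) fm multiset)"
    by (rule deriv_bot_unsatisfiable) simp_all
  then show False
    by (simp add: unsatisfiable_def admissible_Nil)
qed

end
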